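(* Let $\mathcal{A}=\{a_1,a_2,\ldots\}$ be a countably infinite set, let $X$ be a discrete random variable taking values in $\{a_1,\ldots,a_m\}$ for some $m\in\mathbb{N}$, and let $Y$ be a discrete random variable taking values in $\mathcal{A}$. Assume $d_{\mathrm{TV}}(X,Y)\le\eta$ for some $\eta\in(0,1)$. Let $M$ be an integer with $M\ge\max\{m+1,\frac{1}{1-\eta}\}$, and assume that for some $\mu>0$, $$-\sum_{i=M}^\infty P_Y(a_i)\log P_Y(a_i)\le\mu.$$ Then $$|H(X)-H(Y)|\le\eta\log(M-1)+h(\eta)+\mu.$$
   Context: The total variation distance is $d_{\mathrm{TV}}(X,Y) = \frac12\sum_{u\in\mathcal{A}}|P_X(u)-P_Y(u)|$, where $P_X,P_Y$ are the probability mass functions. All logarithms are natural and entropies are in nats, with $0\log0=0$. $h(x) = -x\log x-(1-x)\log(1-x)$ denotes the binary entropy function. *)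

theory Defs
  imports "HOL-Probability.Probability"
begin

definition d_tv :: "'a pmf \<Rightarrow> 'a pmf \<Rightarrow> real" where
  "d_tv p q = (1/2) * infsum (\<lambda>u. \<bar>pmf p u - pmf q u\<bar>) UNIV"

text \<open>Shannon entropy in nats; note ln 0 = 0 in Isabelle, so 0 log 0 = 0.\<close>
definition entropy_pmf :: "'a pmf \<Rightarrow> real" where
  "entropy_pmf p = infsum (\<lambda>u. - pmf p u * ln (pmf p u)) UNIV"

definition bin_entropy :: "real \<Rightarrow> real" where
  "bin_entropy x = - x * ln x - (1 - x) * ln (1 - x)"

end

theory Submission
  imports Defs
begin

text \<open>
  Finite part: for distributions p, q on a finite set of size N with
  d_TV(p, q) = d > 0, decompose p = c + e and q = c + f with c = min p q.
  Subadditivity of -x ln x bounds H(p) by H(c) + H(e); an elementary Gibbs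
  inequality bounds H(q) from below by H(c) + H(f) - h(d); the excess e
  has mass d on at most N - 1 points, so H(e) <= d ln (N - 1) - d ln d; and
  H(f) >= -d ln d.  This gives |H(p) - H(q)| <= d ln (N - 1) + h(d), and the
  right-hand side is nondecreasing in d on (0, 1 - 1/N].

  Tail part: lumping the tail {M..} of Y into the single atom M yields a
  distribution on {1..M} at the same total variation distance from X, whose
  entropy differs from H(Y) by at most the tail entropy (at most \<mu>), since
  lumping can only decrease -x ln x sums.
\<close>

text \<open>The summand of Shannon entropy; an abbreviation, so it unfolds to \<open>- x * ln x\<close> as in the theorem.\<close>

abbreviation neg_xlnx :: "real \<Rightarrow> real" where
  "neg_xlnx x \<equiv> - x * ln x"

lemma neg_xlnx_nonneg:
  fixes x :: real assumes "0 \<le> x" "x \<le> 1" shows "0 \<le> neg_xlnx x"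
  using assms by (cases "x = 0") (auto simp: mult_nonneg_nonpos)

lemma neg_xlnx_subadditive:
  fixes s t :: real assumes "0 \<le> s" "0 \<le> t"
  shows "neg_xlnx (s + t) \<le> neg_xlnx s + neg_xlnx t"
proof (cases "s = 0 \<or> t = 0")
  case False
  then have "s > 0" "t > 0" using assms by auto
  then have "s * ln s \<le> s * ln (s + t)" "t * ln t \<le> t * ln (s + t)"
    by (auto intro: mult_left_mono)
  then show ?thesis by (simp add: algebra_simps)
qed auto

text \<open>The elementary Gibbs inequality \<open>x ln (y/x) \<le> y - x\<close> (from \<open>ln t \<le> t - 1\<close>), in the
  form used repeatedly below.\<close>

lemma gibbs_term:
  fixes x y :: real assumes "0 \<le> x" "0 < y"
  shows "neg_xlnx x \<le> y - x - x * ln y"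
proof (cases "x = 0")
  case False
  then have x: "x > 0" using assms by simp
  have "ln (y / x) \<le> y / x - 1" using x assms by (intro ln_le_minus_one) auto
  then have "x * ln (y / x) \<le> x * (y / x - 1)" using x by (intro mult_left_mono) auto
  moreover have "x * ln (y / x) = x * ln y - x * ln x" using x assms by (simp add: ln_div algebra_simps)
  moreover have "x * (y / x - 1) = y - x" using x by (simp add: field_simps)
  ultimately show ?thesis by simp
qed (use assms in auto)

text \<open>Grouping: the entropy contribution of a total mass is at most the sum of the
  contributions of its parts (each part is at most the total, so \<open>ln\<close> of a part is
  at most \<open>ln\<close> of the total).\<close>

lemma neg_xlnx_infsum_superadditive:
  fixes Q :: "'b \<Rightarrow> real"
  assumes nonneg: "\<And>i. i \<in> A \<Longrightarrow> 0 \<le> Q i" and sQ: "Q summable_on A"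
    and sH: "(\<lambda>i. neg_xlnx (Q i)) summable_on A"
  shows "neg_xlnx (infsum Q A) \<le> (\<Sum>\<^sub>\<infinity>i\<in>A. neg_xlnx (Q i))"
proof -
  define T where "T = infsum Q A"
  have termwise: "Q i * (- ln T) \<le> neg_xlnx (Q i)" if i: "i \<in> A" for i
  proof (cases "Q i = 0")
    case False
    have "sum Q {i} \<le> T" unfolding T_def using sQ nonneg i by (intro finite_sum_le_infsum) auto
    then have "ln (Q i) \<le> ln T" using False nonneg[OF i] by simp
    then show ?thesis using nonneg[OF i] by (simp add: mult_left_mono)
  qed simp
  have "neg_xlnx T = (\<Sum>\<^sub>\<infinity>i\<in>A. Q i * (- ln T))"
    unfolding T_def using sQ by (subst infsum_cmult_left) auto
  also have "\<dots> \<le> (\<Sum>\<^sub>\<infinity>i\<in>A. neg_xlnx (Q i))"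
    using termwise sQ sH by (intro infsum_mono summable_on_cmult_left) auto
  finally show ?thesis unfolding T_def .
qed

text \<open>Lower bound for the contribution of c + f in terms of c and f separately, with
  the splitting weights 1 - d and d; the log-sum inequality for two terms.\<close>

lemma neg_xlnx_split_lower:
  fixes c f d :: real assumes "0 \<le> c" "0 \<le> f" "0 < d" "d < 1"
  shows "neg_xlnx c + neg_xlnx f + c * ln (1 - d) + f * ln d \<le> neg_xlnx (c + f)"
proof (cases "c + f = 0")
  case False
  define s where "s = c + f"
  have s: "s > 0" using False assms s_def by simp
  have "neg_xlnx c \<le> (1 - d) * s - c - c * ln ((1 - d) * s)"
    using assms s by (intro gibbs_term) auto
  moreover have "neg_xlnx f \<le> d * s - f - f * ln (d * s)"
    using assms s by (intro gibbs_term) auto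
  moreover have "ln ((1 - d) * s) = ln (1 - d) + ln s" "ln (d * s) = ln d + ln s"
    using assms s by (simp_all add: ln_mult)
  ultimately show ?thesis unfolding s_def by (simp add: algebra_simps)
next
  case True
  then have "c = 0" "f = 0" using assms by auto
  then show ?thesis by simp
qed

text \<open>Mass d spread over a finite set S has entropy contribution at most that of the
  uniform spreading, \<open>d ln |S| - d ln d\<close>.\<close>

lemma sum_neg_xlnx_le_log_card:
  fixes e :: "'b \<Rightarrow> real"
  assumes "finite S" "\<And>i. i \<in> S \<Longrightarrow> 0 \<le> e i" "sum e S = d" "d > 0"
  shows "(\<Sum>i\<in>S. neg_xlnx (e i)) \<le> d * ln (card S) - d * ln d"
proof -
  define k where "k = real (card S)"
  have S: "S \<noteq> {}" using assms by auto
  then have k: "k > 0" using assms unfolding k_def by (auto simp: card_gt_0_iff)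
  have "(\<Sum>i\<in>S. neg_xlnx (e i)) \<le> (\<Sum>i\<in>S. d / k - e i - e i * ln (d / k))"
    using assms k by (intro sum_mono gibbs_term) auto
  also have "\<dots> = card S * (d / k) - d - d * ln (d / k)"
    using assms by (simp add: sum_subtractf sum_distrib_right[symmetric])
  also have "\<dots> = d * ln k - d * ln d" using k S assms by (simp add: k_def ln_div algebra_simps)
  finally show ?thesis unfolding k_def .
qed

text \<open>The bound \<open>d ln (N - 1) + h(d)\<close> is nondecreasing in d up to \<eta> whenever
  \<open>\<eta> \<le> 1 - 1/N\<close>, by concavity of h (its derivative \<open>ln ((1 - d)/d)\<close> dominates \<open>-ln (N - 1)\<close>).\<close>

lemma entropy_bound_mono:
  fixes d \<eta> N :: real
  assumes "0 < d" "d \<le> \<eta>" "\<eta> < 1" "N * (1 - \<eta>) \<ge> 1"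
  shows "d * ln (N - 1) + bin_entropy d \<le> \<eta> * ln (N - 1) + bin_entropy \<eta>"
proof -
  have "neg_xlnx d \<le> \<eta> - d - d * ln \<eta>" using assms by (intro gibbs_term) auto
  moreover have "neg_xlnx (1 - d) \<le> (1 - \<eta>) - (1 - d) - (1 - d) * ln (1 - \<eta>)"
    using assms by (intro gibbs_term) auto
  ultimately have h: "bin_entropy d - bin_entropy \<eta> \<le> (\<eta> - d) * (ln \<eta> - ln (1 - \<eta>))"
    unfolding bin_entropy_def by (simp add: algebra_simps)
  have "\<eta> \<le> (1 - \<eta>) * (N - 1)" using assms by (simp add: algebra_simps)
  then have "ln \<eta> \<le> ln ((1 - \<eta>) * (N - 1))" using assms by simp
  also have "\<dots> = ln (1 - \<eta>) + ln (N - 1)"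
    using assms \<open>\<eta> \<le> (1 - \<eta>) * (N - 1)\<close> by (subst ln_mult) (auto simp: zero_less_mult_iff)
  finally have "(\<eta> - d) * (ln \<eta> - ln (1 - \<eta>)) \<le> (\<eta> - d) * ln (N - 1)"
    using assms by (intro mult_left_mono) auto
  with h show ?thesis by (simp add: algebra_simps)
qed

lemma entropy_diff_finite_one_sided:
  fixes p q :: "'b \<Rightarrow> real"
  assumes fin: "finite I" and p: "\<And>i. i \<in> I \<Longrightarrow> 0 \<le> p i" and q: "\<And>i. i \<in> I \<Longrightarrow> 0 \<le> q i"
    and ps: "sum p I = 1" and qs: "sum q I = 1"
    and d_def: "d = (\<Sum>i\<in>I. max (p i - q i) 0)" and d: "0 < d" "d < 1"
  shows "(\<Sum>i\<in>I. neg_xlnx (p i)) - (\<Sum>i\<in>I. neg_xlnx (q i))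
           \<le> d * ln (real (card I) - 1) + bin_entropy d"
proof -
  define c where "c i = min (p i) (q i)" for i
  define e where "e i = max (p i - q i) 0" for i
  define f where "f i = max (q i - p i) 0" for i
  have pce: "p i = c i + e i" and qcf: "q i = c i + f i" for i
    unfolding c_def e_def f_def by auto
  have c0: "0 \<le> c i" if "i \<in> I" for i using p q that unfolding c_def by auto
  have e0: "0 \<le> e i" and f0: "0 \<le> f i" for i unfolding e_def f_def by auto
  have se: "sum e I = d" unfolding d_def e_def ..
  have sc: "sum c I = 1 - d" using ps se by (simp add: pce sum.distrib)
  have sf: "sum f I = d" using qs sc by (simp add: qcf sum.distrib)
  have Hp: "(\<Sum>i\<in>I. neg_xlnx (p i)) \<le> (\<Sum>i\<in>I. neg_xlnx (c i)) + (\<Sum>i\<in>I. neg_xlnx (e i))"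
    unfolding sum.distrib[symmetric] pce using c0 e0 by (intro sum_mono neg_xlnx_subadditive)
  have "(\<Sum>i\<in>I. neg_xlnx (q i))
          \<ge> (\<Sum>i\<in>I. neg_xlnx (c i) + neg_xlnx (f i) + c i * ln (1 - d) + f i * ln d)"
    unfolding qcf using c0 f0 d by (intro sum_mono neg_xlnx_split_lower)
  also have "(\<Sum>i\<in>I. neg_xlnx (c i) + neg_xlnx (f i) + c i * ln (1 - d) + f i * ln d)
      = (\<Sum>i\<in>I. neg_xlnx (c i)) + (\<Sum>i\<in>I. neg_xlnx (f i)) + sum c I * ln (1 - d) + sum f I * ln d"
    by (simp only: sum.distrib sum_distrib_right)
  finally have Hq: "(\<Sum>i\<in>I. neg_xlnx (c i)) + (\<Sum>i\<in>I. neg_xlnx (f i)) + (1 - d) * ln (1 - d) + d * ln d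
                   \<le> (\<Sum>i\<in>I. neg_xlnx (q i))"
    unfolding sc sf .
  have Hf: "neg_xlnx d \<le> (\<Sum>i\<in>I. neg_xlnx (f i))"
    using neg_xlnx_infsum_superadditive[of I f] fin f0 sf by simp
  \<comment> \<open>Some point j carries excess of q, so the excess e of p lives on at most card I - 1 points.\<close>
  have "sum f I \<noteq> 0" using sf d by simp
  then obtain j where "j \<in> I" "f j \<noteq> 0" by (rule sum.not_neutral_contains_not_neutral)
  then have j: "j \<in> I" "f j > 0" using f0 by (auto simp: less_le)
  then have ej: "e j = 0" unfolding e_def f_def by auto
  have card: "real (card (I - {j})) = real (card I) - 1"
  proof -
    have "card I \<ge> 1" using j fin by (auto simp: Suc_le_eq card_gt_0_iff)
    then show ?thesis using j fin by simp
  qed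
  have "sum e (I - {j}) = d" using se ej j fin by (simp add: sum.remove)
  then have "(\<Sum>i\<in>I - {j}. neg_xlnx (e i)) \<le> d * ln (real (card I) - 1) - d * ln d"
    using sum_neg_xlnx_le_log_card[of "I - {j}" e d] fin e0 d card by simp
  then have He: "(\<Sum>i\<in>I. neg_xlnx (e i)) \<le> d * ln (real (card I) - 1) - d * ln d"
    using ej j fin by (simp add: sum.remove)
  show ?thesis using Hp Hq Hf He unfolding bin_entropy_def by (simp add: algebra_simps)
qed

lemma bin_entropy_nonneg: "0 \<le> x \<Longrightarrow> x \<le> 1 \<Longrightarrow> 0 \<le> bin_entropy x"
  using neg_xlnx_nonneg[of x] neg_xlnx_nonneg[of "1 - x"] unfolding bin_entropy_def by linarith

lemma entropy_diff_finite:
  fixes p q :: "'b \<Rightarrow> real"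
  assumes fin: "finite I" and p: "\<And>i. i \<in> I \<Longrightarrow> 0 \<le> p i" and q: "\<And>i. i \<in> I \<Longrightarrow> 0 \<le> q i"
    and ps: "sum p I = 1" and qs: "sum q I = 1"
    and tv: "(1/2) * (\<Sum>i\<in>I. \<bar>p i - q i\<bar>) \<le> \<eta>" and \<eta>: "0 < \<eta>" "\<eta> < 1"
    and N: "real (card I) * (1 - \<eta>) \<ge> 1"
  shows "\<bar>(\<Sum>i\<in>I. neg_xlnx (p i)) - (\<Sum>i\<in>I. neg_xlnx (q i))\<bar>
           \<le> \<eta> * ln (real (card I) - 1) + bin_entropy \<eta>"
proof -
  define d where "d = (\<Sum>i\<in>I. max (p i - q i) 0)"
  \<comment> \<open>Since both sums are 1, the positive and negative parts of p - q have equal mass d.\<close>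
  have d_neg: "d = (\<Sum>i\<in>I. max (q i - p i) 0)"
  proof -
    have "d - (\<Sum>i\<in>I. max (q i - p i) 0) = (\<Sum>i\<in>I. p i - q i)"
      unfolding d_def sum_subtractf[symmetric] by (intro sum.cong) auto
    then show ?thesis using ps qs by (simp add: sum_subtractf)
  qed
  have "(\<Sum>i\<in>I. \<bar>p i - q i\<bar>) = d + (\<Sum>i\<in>I. max (q i - p i) 0)"
    unfolding d_def sum.distrib[symmetric] by (intro sum.cong) auto
  then have d_le: "d \<le> \<eta>" using tv d_neg by simp
  show ?thesis
  proof (cases "d = 0")
    case True
    have "max (p i - q i) 0 = 0" "max (q i - p i) 0 = 0" if "i \<in> I" for i
      using True[unfolded d_def] True[unfolded d_neg] fin that by (simp_all add: sum_nonneg_eq_0_iff)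
    then have "p i = q i" if "i \<in> I" for i using that by (fastforce simp: max_def split: if_splits)
    then have "(\<Sum>i\<in>I. neg_xlnx (p i)) = (\<Sum>i\<in>I. neg_xlnx (q i))" by simp
    moreover have "real (card I) \<ge> 2"
    proof -
      have "real (card I) > 0" using N by (cases "card I = 0") auto
      then have "real (card I) * \<eta> > 0" using \<eta> by simp
      then have "card I > 1" using N by (simp add: algebra_simps)
      then show ?thesis by simp
    qed
    ultimately show ?thesis using \<eta> bin_entropy_nonneg[of \<eta>] by simp
  next
    case False
    then have d: "0 < d" "d < 1" using d_le \<eta> unfolding d_def by (simp_all add: order.not_eq_order_implies_strict sum_nonneg)
    show ?thesis
      using entropy_diff_finite_one_sided[OF fin p q ps qs d_def d]
        entropy_diff_finite_one_sided[OF fin q p qs ps d_neg d]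
        entropy_bound_mono[OF d(1) d_le \<eta>(2) N]
      by linarith
  qed
qed

lemma infsum_split_head:
  fixes f :: "nat \<Rightarrow> real"
  assumes "f summable_on {M..}" "k \<le> M"
  shows "(\<Sum>\<^sub>\<infinity>i\<in>{k..}. f i) = (\<Sum>i\<in>{k..<M}. f i) + (\<Sum>\<^sub>\<infinity>i\<in>{M..}. f i)"
proof -
  have "{k..} = {k..<M} \<union> {M..}" using assms(2) by auto
  then show ?thesis using assms(1) by (simp only:) (subst infsum_Un_disjoint; auto)
qed

definition lump_tail :: "nat \<Rightarrow> (nat \<Rightarrow> real) \<Rightarrow> nat \<Rightarrow> real" where
  "lump_tail M Q i = (if i = M then (\<Sum>\<^sub>\<infinity>j\<in>{M..}. Q j) else Q i)"

lemma sum_lump_tail: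
  assumes "1 \<le> M"
  shows "(\<Sum>i\<in>{1..M}. g i (lump_tail M Q i))
           = (\<Sum>i\<in>{1..<M}. g i (Q i)) + g M (\<Sum>\<^sub>\<infinity>j\<in>{M..}. Q j)"
proof -
  have "(\<Sum>i\<in>{1..<M}. g i (lump_tail M Q i)) = (\<Sum>i\<in>{1..<M}. g i (Q i))"
    by (intro sum.cong) (auto simp: lump_tail_def)
  then show ?thesis using assms by (simp add: sum.last_plus lump_tail_def add.commute)
qed

text \<open>Compare P with Q lumped at M using the finite bound,
  then account for the tail.\<close>

lemma entropy_diff_lumped_tail:
  fixes P Q :: "nat \<Rightarrow> real" and M :: nat
  assumes P0: "\<And>i. 0 \<le> P i" and P_tail: "\<And>i. M \<le> i \<Longrightarrow> P i = 0" and Ps: "sum P {1..<M} = 1"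
    and Q0: "\<And>i. 0 \<le> Q i" and sQ: "Q summable_on {1..}" and Qs: "(\<Sum>\<^sub>\<infinity>i\<in>{1..}. Q i) = 1"
    and sH: "(\<lambda>i. neg_xlnx (Q i)) summable_on {M..}"
    and tv: "(1/2) * (\<Sum>\<^sub>\<infinity>i\<in>{1..}. \<bar>P i - Q i\<bar>) \<le> \<eta>" and \<eta>: "0 < \<eta>" "\<eta> < 1"
    and N: "real M * (1 - \<eta>) \<ge> 1"
    and tail: "(\<Sum>\<^sub>\<infinity>i\<in>{M..}. neg_xlnx (Q i)) \<le> \<mu>"
  shows "\<bar>(\<Sum>i\<in>{1..<M}. neg_xlnx (P i)) - (\<Sum>\<^sub>\<infinity>i\<in>{1..}. neg_xlnx (Q i))\<bar>
           \<le> \<eta> * ln (real M - 1) + bin_entropy \<eta> + \<mu>"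
proof -
  have M: "1 \<le> M" using N by (cases M) auto
  define T where "T = (\<Sum>\<^sub>\<infinity>i\<in>{M..}. Q i)"
  define q where "q = lump_tail M Q"
  have sQM: "Q summable_on {M..}" using M by (intro summable_on_subset_banach[OF sQ]) auto
  have Q_split: "sum Q {1..<M} + T = 1" using infsum_split_head[OF sQM M] Qs by (simp add: T_def)
  have T: "0 \<le> T" "T \<le> 1"
    using Q_split sum_nonneg[of "{1..<M}" Q] Q0 unfolding T_def by (auto intro: infsum_nonneg)
  have qs: "sum q {1..M} = 1"
    using sum_lump_tail[OF M, of "\<lambda>_ x. x" Q] Q_split by (simp add: q_def T_def)
  have ps: "sum P {1..M} = 1" using Ps P_tail M by (simp add: sum.last_plus)
  have q0: "0 \<le> q i" for i using Q0 T unfolding q_def lump_tail_def T_def by auto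
  have "(\<Sum>\<^sub>\<infinity>i\<in>{M..}. \<bar>P i - Q i\<bar>) = T" unfolding T_def using P_tail Q0 by (intro infsum_cong) auto
  moreover have "(\<lambda>i. \<bar>P i - Q i\<bar>) summable_on {M..}"
    using sQM P_tail Q0 by (subst summable_on_cong[where g = Q]) auto
  ultimately have "(\<Sum>\<^sub>\<infinity>i\<in>{1..}. \<bar>P i - Q i\<bar>) = (\<Sum>i\<in>{1..M}. \<bar>P i - q i\<bar>)"
    using infsum_split_head[of _ M 1] sum_lump_tail[OF M, of "\<lambda>i x. \<bar>P i - x\<bar>" Q] M P_tail T
    by (simp add: q_def T_def)
  then have tv_q: "(1/2) * (\<Sum>i\<in>{1..M}. \<bar>P i - q i\<bar>) \<le> \<eta>" using tv by simp
  have "\<bar>(\<Sum>i\<in>{1..M}. neg_xlnx (P i)) - (\<Sum>i\<in>{1..M}. neg_xlnx (q i))\<bar> \<le> \<eta> * ln (real M - 1) + bin_entropy \<eta>"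
    using entropy_diff_finite[of "{1..M}" P q, OF _ _ _ ps qs tv_q \<eta>] P0 q0 N by simp
  \<comment> \<open>Lumping the tail only lowers its entropy contribution, and that contribution is at most \<mu>.\<close>
  moreover have "(\<Sum>i\<in>{1..M}. neg_xlnx (P i)) = (\<Sum>i\<in>{1..<M}. neg_xlnx (P i))"
    using M P_tail by (simp add: sum.last_plus)
  moreover have "(\<Sum>i\<in>{1..M}. neg_xlnx (q i)) = (\<Sum>i\<in>{1..<M}. neg_xlnx (Q i)) + neg_xlnx T"
    using sum_lump_tail[OF M, of "\<lambda>_. neg_xlnx" Q] by (simp add: q_def T_def)
  moreover have "(\<Sum>\<^sub>\<infinity>i\<in>{1..}. neg_xlnx (Q i))
                   = (\<Sum>i\<in>{1..<M}. neg_xlnx (Q i)) + (\<Sum>\<^sub>\<infinity>i\<in>{M..}. neg_xlnx (Q i))"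
    using infsum_split_head[OF sH M] .
  moreover have "neg_xlnx T \<le> (\<Sum>\<^sub>\<infinity>i\<in>{M..}. neg_xlnx (Q i))"
    unfolding T_def using Q0 sQM sH by (intro neg_xlnx_infsum_superadditive)
  moreover have "0 \<le> neg_xlnx T" using T by (rule neg_xlnx_nonneg)
  ultimately show ?thesis using tail by (simp add: abs_le_iff)
qed

lemma pmf_summable_on: "pmf p summable_on A"
proof -
  have "Infinite_Sum.abs_summable_on (pmf p) A"
    using abs_summable_equivalent pmf_abs_summable by blast
  then show ?thesis by (rule abs_summable_summable)
qed

lemma pmf_infsum_UNIV: "(\<Sum>\<^sub>\<infinity>u. pmf p u) = 1"
  using infsetsum_infsum[OF pmf_abs_summable, of p UNIV] infsetsum_pmf_eq_1[of p UNIV] by simp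

lemma infsum_reindex_finite_support:
  fixes g :: "'a \<Rightarrow> real"
  assumes "inj_on a B" "finite B" "\<And>u. u \<notin> a ` B \<Longrightarrow> g u = 0"
  shows "(\<Sum>\<^sub>\<infinity>u. g u) = (\<Sum>i\<in>B. g (a i))"
proof -
  have "(\<Sum>\<^sub>\<infinity>u. g u) = (\<Sum>\<^sub>\<infinity>u\<in>a ` B. g u)" using assms(3) by (intro infsum_cong_neutral) auto
  then show ?thesis using assms(1,2) by (simp add: infsum_reindex sum.reindex)
qed

lemma pmf_supported_on_prefix:
  fixes a :: "nat \<Rightarrow> 'a" and X :: "'a pmf" and M :: nat
  assumes inj: "inj_on a {1..}" and supp: "set_pmf X \<subseteq> a ` {1..<M}"
  shows "(\<Sum>i\<in>{1..<M}. pmf X (a i)) = 1"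
    and "\<And>i. M \<le> i \<Longrightarrow> pmf X (a i) = 0"
    and "entropy_pmf X = (\<Sum>i\<in>{1..<M}. neg_xlnx (pmf X (a i)))"
proof -
  have injM: "inj_on a {1..<M}" using inj by (rule inj_on_subset) auto
  have off: "pmf X u = 0" if "u \<notin> a ` {1..<M}" for u
    using that supp by (auto simp: set_pmf_iff)
  show "(\<Sum>i\<in>{1..<M}. pmf X (a i)) = 1"
    using infsum_reindex_finite_support[OF injM, of "pmf X"] off by (simp add: pmf_infsum_UNIV)
  show "entropy_pmf X = (\<Sum>i\<in>{1..<M}. neg_xlnx (pmf X (a i)))"
    using infsum_reindex_finite_support[OF injM, of "\<lambda>u. neg_xlnx (pmf X u)"] off
    by (simp add: entropy_pmf_def)
  fix i assume "M \<le> i"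
  show "pmf X (a i) = 0"
  proof (cases "i = 0")
    case False
    then have "i \<in> {1..}" by simp
    moreover have "{1..<M} \<subseteq> {1..}" by auto
    ultimately have "a i \<notin> a ` {1..<M}" using \<open>M \<le> i\<close> inj_on_image_mem_iff[OF inj] by auto
    then show ?thesis by (rule off)
  qed (use \<open>M \<le> i\<close> supp in \<open>auto simp: set_pmf_iff\<close>)
qed

theorem corollary3:
  fixes a :: "nat \<Rightarrow> 'a" and X Y :: "'a pmf" and m M :: nat and \<eta> \<mu> :: real
  assumes enum: "bij_betw a {1..} (UNIV :: 'a set)"
    and X_vals: "set_pmf X \<subseteq> a ` {1..m}"
    and tv: "d_tv X Y \<le> \<eta>"
    and eta: "0 < \<eta>" "\<eta> < 1"
    and M1: "real M \<ge> real m + 1"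
    and M2: "real M \<ge> 1 / (1 - \<eta>)"
    and mu: "\<mu> > 0"
    and tail_summable: "(\<lambda>i. - pmf Y (a i) * ln (pmf Y (a i))) summable_on {M..}"
    and tail: "(\<Sum>\<^sub>\<infinity>i\<in>{M..}. - pmf Y (a i) * ln (pmf Y (a i))) \<le> \<mu>"
  shows "\<bar>entropy_pmf X - entropy_pmf Y\<bar> \<le> \<eta> * ln (real M - 1) + bin_entropy \<eta> + \<mu>"
proof -
  define P where "P = (\<lambda>i. pmf X (a i))"
  define Q where "Q = (\<lambda>i. pmf Y (a i))"
  have inj: "inj_on a {1..}" using enum by (simp add: bij_betw_def)
  have "set_pmf X \<subseteq> a ` {1..<M}" using X_vals M1 by fastforce
  note X_prefix = pmf_supported_on_prefix[OF inj this, folded P_def]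
  have HY: "entropy_pmf Y = (\<Sum>\<^sub>\<infinity>i\<in>{1..}. neg_xlnx (Q i))"
    using infsum_reindex_bij_betw[OF enum, of "\<lambda>u. neg_xlnx (pmf Y u)"]
    by (simp add: entropy_pmf_def Q_def)
  have tv': "d_tv X Y = (1/2) * (\<Sum>\<^sub>\<infinity>i\<in>{1..}. \<bar>P i - Q i\<bar>)"
    using infsum_reindex_bij_betw[OF enum, of "\<lambda>u. \<bar>pmf X u - pmf Y u\<bar>"]
    by (simp add: d_tv_def P_def Q_def)
  have Qs: "(\<Sum>\<^sub>\<infinity>i\<in>{1..}. Q i) = 1"
    using infsum_reindex_bij_betw[OF enum, of "pmf Y"] by (simp add: Q_def pmf_infsum_UNIV)
  have sQ: "Q summable_on {1..}"
    using summable_on_reindex_bij_betw[OF enum, of "pmf Y"] by (simp add: Q_def pmf_summable_on)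
  have "real M * (1 - \<eta>) \<ge> 1" using M2 eta by (simp add: field_simps)
  with X_prefix(1,2) Qs sQ tv tv' eta tail_summable tail
  have "\<bar>(\<Sum>i\<in>{1..<M}. neg_xlnx (P i)) - (\<Sum>\<^sub>\<infinity>i\<in>{1..}. neg_xlnx (Q i))\<bar>
          \<le> \<eta> * ln (real M - 1) + bin_entropy \<eta> + \<mu>"
    by (intro entropy_diff_lumped_tail) (auto simp: P_def Q_def)
  then show ?thesis using X_prefix(3) HY by (simp add: P_def)
qed

end
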